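(* Let $\mathcal A_{IV}$ be the algebra of Laurent polynomials in $a_{IV},b_{IV},c_{IV},d_{IV},e_{IV},f_{IV},h_{IV}$ with the log-canonical bracket (writing $a,\dots,h$ for the $IV$-variables) $\{a,b\}=0,\ \{a,c\}=-\tfrac12 ac,\ \{a,d\}=-\tfrac12 ad,\ \{a,e\}=0,\ \{a,f\}=\tfrac12 af,\ \{a,h\}=\tfrac12 ah,$ $\{b,c\}=\tfrac14 bc,\ \{b,d\}=0,\ \{b,e\}=\tfrac14 be,\ \{b,f\}=\tfrac14 bf,\ \{b,h\}=-\tfrac14 bh,$ $\{c,d\}=-\tfrac14 cd,\ \{c,e\}=\tfrac14 ce,\ \{c,f\}=0,\ \{c,h\}=\tfrac14 ch,$ $\{d,e\}=-\tfrac14 de,\ \{d,f\}=\tfrac14 df,\ \{d,h\}=\tfrac14 dh,\ \{e,f\}=-\tfrac14 ef,\ \{e,h\}=0,\ \{f,h\}=\tfrac14 fh$. Let $\mathcal A_{II}$ be the algebra of Laurent polynomials in $a,b,c,d,e,f,g,h,i$ with the log-canonical bracket $\{a,b\}=0,\ \{a,c\}=-\tfrac14 ac,\ \{a,d\}=-\tfrac14 ad,\ \{a,e\}=0,\ \{a,f\}=\tfrac14 af,\ \{a,g\}=-\tfrac14 ag,\ \{a,h\}=\tfrac14 ah,\ \{a,i\}=\tfrac14 ai,$ $\{b,c\}=\tfrac14 bc,\ \{b,d\}=0,\ \{b,e\}=\tfrac14 be,\ \{b,f\}=\tfrac14 bf,\ \{b,g\}=0,\ \{b,h\}=-\tfrac14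 bh,\ \{b,i\}=0,$ $\{c,d\}=-\tfrac14 cd,\ \{c,e\}=\tfrac14 ce,\ \{c,f\}=-\tfrac14 cf,\ \{c,g\}=\{c,h\}=0,\ \{c,i\}=\tfrac14 ci,$ $\{d,e\}=-\tfrac14 de,\ \{d,f\}=\{d,g\}=\{d,h\}=0,\ \{d,i\}=\tfrac14 di,$ $\{e,f\}=-\tfrac14 ef,\ \{e,g\}=\{e,h\}=\{e,i\}=0,$ $\{f,g\}=-\tfrac14 fg,\ \{f,h\}=\tfrac14 fh,\ \{f,i\}=0,\ \{g,h\}=\tfrac14 gh,\ \{g,i\}=-\tfrac14 gi,\ \{h,i\}=0$. Then the assignment $a_{IV}\mapsto ag$, $b_{IV}\mapsto b$, $c_{IV}\mapsto cg$, $d_{IV}\mapsto dg$, $e_{IV}\mapsto e$, $f_{IV}\mapsto f$, $h_{IV}\mapsto h$ defines an injective Poisson homomorphism $\mathcal A_{IV}\to\mathcal A_{II}$, realising $\mathcal A_{IV}$ as a Poisson subalgebra of $\mathcal A_{II}$.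
   Context: A log-canonical bracket is extended from the generators to all Laurent polynomials by bilinearity, antisymmetry and the Leibniz rule. *)

theory Defs
  imports Main "HOL-Library.Poly_Mapping"
begin

(* Laurent polynomials in variables indexed by a type 'v, with coefficients in 'k:
  finitely supported maps from integer exponent vectors ('v \<Rightarrow>\<^sub>0 int) to 'k.
  Multiplication is the convolution product of Poly_Mapping (adding exponents). *)

type_synonym ('v, 'k) lpoly = "('v \<Rightarrow>\<^sub>0 int) \<Rightarrow>\<^sub>0 'k"

definition lmonom :: "('v \<Rightarrow>\<^sub>0 int) \<Rightarrow> ('v, 'k::comm_ring_1) lpoly" where
  "lmonom \<alpha> = Poly_Mapping.single \<alpha> 1"

definition lvar :: "'v \<Rightarrow> ('v, 'k::comm_ring_1) lpoly" where
  "lvar v = lmonom (Poly_Mapping.single v 1)"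

(* Log-canonical bracket with structure matrix w: on generators
  {x_i, x_j} = w i j * x_i * x_j; its extension by bilinearity and the Leibniz rule
  gives {x^\<alpha>, x^\<beta>} = (\<Sum>_{i,j} \<alpha>_i \<beta>_j w i j) x^(\<alpha>+\<beta>). *)

definition lc_pair :: "('v \<Rightarrow> 'v \<Rightarrow> 'k::comm_ring_1) \<Rightarrow> ('v \<Rightarrow>\<^sub>0 int) \<Rightarrow> ('v \<Rightarrow>\<^sub>0 int) \<Rightarrow> 'k" where
  "lc_pair w \<alpha> \<beta> = (\<Sum>i\<in>Poly_Mapping.keys \<alpha>. \<Sum>j\<in>Poly_Mapping.keys \<beta>.
      of_int (Poly_Mapping.lookup \<alpha> i * Poly_Mapping.lookup \<beta> j) * w i j)"

definition lc_bracket :: "('v \<Rightarrow> 'v \<Rightarrow> 'k::comm_ring_1) \<Rightarrow> ('v, 'k) lpoly \<Rightarrow> ('v, 'k) lpoly \<Rightarrow> ('v, 'k) lpoly" where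
  "lc_bracket w p q = (\<Sum>\<alpha>\<in>Poly_Mapping.keys p. \<Sum>\<beta>\<in>Poly_Mapping.keys q.
      Poly_Mapping.single (\<alpha> + \<beta>) (Poly_Mapping.lookup p \<alpha> * Poly_Mapping.lookup q \<beta> * lc_pair w \<alpha> \<beta>))"

datatype V4 = a4 | b4 | c4 | d4 | e4 | f4 | h4

fun idx4 :: "V4 \<Rightarrow> nat" where
  "idx4 a4 = 0" | "idx4 b4 = 1" | "idx4 c4 = 2" | "idx4 d4 = 3" | "idx4 e4 = 4" | "idx4 f4 = 5" | "idx4 h4 = 6"

fun w4u :: "V4 \<Rightarrow> V4 \<Rightarrow> 'k::field" where
  "w4u a4 c4 = - 1/2" | "w4u a4 d4 = - 1/2" | "w4u a4 f4 = 1/2" | "w4u a4 h4 = 1/2"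
| "w4u b4 c4 = 1/4" | "w4u b4 e4 = 1/4" | "w4u b4 f4 = 1/4" | "w4u b4 h4 = - 1/4"
| "w4u c4 d4 = - 1/4" | "w4u c4 e4 = 1/4" | "w4u c4 h4 = 1/4"
| "w4u d4 e4 = - 1/4" | "w4u d4 f4 = 1/4" | "w4u d4 h4 = 1/4"
| "w4u e4 f4 = - 1/4" | "w4u f4 h4 = 1/4"
| "w4u _ _ = 0"

definition w4 :: "V4 \<Rightarrow> V4 \<Rightarrow> 'k::field" where
  "w4 x y = (if idx4 x < idx4 y then w4u x y else if idx4 y < idx4 x then - w4u y x else 0)"

datatype V2 = a2 | b2 | c2 | d2 | e2 | f2 | g2 | h2 | i2

fun idx2 :: "V2 \<Rightarrow> nat" where
  "idx2 a2 = 0" | "idx2 b2 = 1" | "idx2 c2 = 2" | "idx2 d2 = 3" | "idx2 e2 = 4" | "idx2 f2 = 5"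
| "idx2 g2 = 6" | "idx2 h2 = 7" | "idx2 i2 = 8"

fun w2u :: "V2 \<Rightarrow> V2 \<Rightarrow> 'k::field" where
  "w2u a2 c2 = - 1/4" | "w2u a2 d2 = - 1/4" | "w2u a2 f2 = 1/4" | "w2u a2 g2 = - 1/4"
| "w2u a2 h2 = 1/4" | "w2u a2 i2 = 1/4"
| "w2u b2 c2 = 1/4" | "w2u b2 e2 = 1/4" | "w2u b2 f2 = 1/4" | "w2u b2 h2 = - 1/4"
| "w2u c2 d2 = - 1/4" | "w2u c2 e2 = 1/4" | "w2u c2 f2 = - 1/4" | "w2u c2 i2 = 1/4"
| "w2u d2 e2 = - 1/4" | "w2u d2 i2 = 1/4"
| "w2u e2 f2 = - 1/4"
| "w2u f2 g2 = - 1/4" | "w2u f2 h2 = 1/4"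
| "w2u g2 h2 = 1/4" | "w2u g2 i2 = - 1/4"
| "w2u _ _ = 0"

definition w2 :: "V2 \<Rightarrow> V2 \<Rightarrow> 'k::field" where
  "w2 x y = (if idx2 x < idx2 y then w2u x y else if idx2 y < idx2 x then - w2u y x else 0)"

(* Exponent of the image of the monomial x^\<alpha> under
  a\<mapsto>ag, b\<mapsto>b, c\<mapsto>cg, d\<mapsto>dg, e\<mapsto>e, f\<mapsto>f, h\<mapsto>h. *)
definition exp_map :: "(V4 \<Rightarrow>\<^sub>0 int) \<Rightarrow> (V2 \<Rightarrow>\<^sub>0 int)" where
  "exp_map \<alpha> =
     Poly_Mapping.single a2 (Poly_Mapping.lookup \<alpha> a4) + Poly_Mapping.single b2 (Poly_Mapping.lookup \<alpha> b4)
   + Poly_Mapping.single c2 (Poly_Mapping.lookup \<alpha> c4) + Poly_Mapping.single d2 (Poly_Mapping.lookup \<alpha> d4)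
   + Poly_Mapping.single e2 (Poly_Mapping.lookup \<alpha> e4) + Poly_Mapping.single f2 (Poly_Mapping.lookup \<alpha> f4)
   + Poly_Mapping.single g2 (Poly_Mapping.lookup \<alpha> a4 + Poly_Mapping.lookup \<alpha> c4 + Poly_Mapping.lookup \<alpha> d4)
   + Poly_Mapping.single h2 (Poly_Mapping.lookup \<alpha> h4)"

definition phi :: "(V4, 'k::comm_ring_1) lpoly \<Rightarrow> (V2, 'k) lpoly" where
  "phi p = (\<Sum>\<alpha>\<in>Poly_Mapping.keys p. Poly_Mapping.single (exp_map \<alpha>) (Poly_Mapping.lookup p \<alpha>))"

end

theory Submission imports Defs begin

text \<open>A map \<open>E\<close> on exponent vectors induces the linear map \<open>x\<^sup>\<alpha> \<mapsto> x\<^bsup>E \<alpha>\<^esup>\<close> on Laurent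
  polynomials; \<open>phi\<close> is the one induced by \<open>exp_map\<close>. Such a map is an algebra homomorphism when
  \<open>E\<close> is additive, is injective when \<open>E\<close> is, and is Poisson as soon as \<open>E\<close> transports the
  bilinear form \<open>lc_pair\<close> on exponents, because the log-canonical bracket of two monomials is that
  form times their product. For \<open>exp_map\<close> the last condition is a finite identity between two
  quadratic forms in the exponents, checked by direct expansion.\<close>

definition monomial_map :: "('a \<Rightarrow> 'b) \<Rightarrow> ('a \<Rightarrow>\<^sub>0 'k::comm_monoid_add) \<Rightarrow> 'b \<Rightarrow>\<^sub>0 'k" where
  "monomial_map E p = (\<Sum>\<alpha>\<in>Poly_Mapping.keys p. Poly_Mapping.single (E \<alpha>) (Poly_Mapping.lookup p \<alpha>))"

lemma phi_eq_monomial_map: "phi = monomial_map exp_map"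
  by (simp add: fun_eq_iff phi_def monomial_map_def)

lemma monomial_map_single: "monomial_map E (Poly_Mapping.single \<alpha> c) = Poly_Mapping.single (E \<alpha>) c"
  by (cases "c = 0") (simp_all add: monomial_map_def)

lemma monomial_map_zero: "monomial_map E 0 = 0"
  by (simp add: monomial_map_def)

lemma monomial_map_add: "monomial_map E (p + q) = monomial_map E p + monomial_map E q"
  unfolding monomial_map_def by (rule setsum_keys_plus_distrib) (simp_all add: single_add)

lemma monomial_map_sum: "monomial_map E (sum f A) = (\<Sum>x\<in>A. monomial_map E (f x))"
  by (induction A rule: infinite_finite_induct) (simp_all add: monomial_map_zero monomial_map_add)

lemma lookup_monomial_map:
  "Poly_Mapping.lookup (monomial_map E p) \<gamma> = (\<Sum>\<alpha>\<in>Poly_Mapping.keys p. Poly_Mapping.lookup p \<alpha> when E \<alpha> = \<gamma>)"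
  by (simp add: monomial_map_def lookup_sum lookup_single)

lemma lookup_monomial_map_image:
  assumes "inj E"
  shows "Poly_Mapping.lookup (monomial_map E p) (E \<alpha>) = Poly_Mapping.lookup p \<alpha>"
proof -
  have "(\<Sum>\<beta>\<in>Poly_Mapping.keys p. Poly_Mapping.lookup p \<beta> when E \<beta> = E \<alpha>)
      = (\<Sum>\<beta>\<in>Poly_Mapping.keys p. if \<beta> = \<alpha> then Poly_Mapping.lookup p \<beta> else 0)"
    using assms by (intro sum.cong) (auto simp: when_def dest: injD)
  then show ?thesis
    by (simp add: lookup_monomial_map sum.delta in_keys_iff)
qed

lemma lookup_monomial_map_not_image:
  "\<gamma> \<notin> range E \<Longrightarrow> Poly_Mapping.lookup (monomial_map E p) \<gamma> = 0"
  by (auto simp: lookup_monomial_map when_def intro!: sum.neutral)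

lemma keys_monomial_map:
  assumes "inj E"
  shows "Poly_Mapping.keys (monomial_map E p) = E ` Poly_Mapping.keys p"
proof
  show "Poly_Mapping.keys (monomial_map E p) \<subseteq> E ` Poly_Mapping.keys p"
  proof
    fix \<gamma> assume \<gamma>: "\<gamma> \<in> Poly_Mapping.keys (monomial_map E p)"
    then have "\<gamma> \<in> range E"
      using lookup_monomial_map_not_image[of \<gamma> E p] by (auto simp: in_keys_iff)
    with \<gamma> show "\<gamma> \<in> E ` Poly_Mapping.keys p"
      by (auto simp: in_keys_iff lookup_monomial_map_image[OF assms])
  qed
  show "E ` Poly_Mapping.keys p \<subseteq> Poly_Mapping.keys (monomial_map E p)"
    by (auto simp: in_keys_iff lookup_monomial_map_image[OF assms])
qed

lemma inj_monomial_map: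
  assumes "inj E"
  shows "inj (monomial_map E :: ('a \<Rightarrow>\<^sub>0 'k::comm_monoid_add) \<Rightarrow> _)"
proof (rule injI)
  fix p q :: "'a \<Rightarrow>\<^sub>0 'k"
  assume "monomial_map E p = monomial_map E q"
  then have "Poly_Mapping.lookup (monomial_map E p) (E \<alpha>) = Poly_Mapping.lookup (monomial_map E q) (E \<alpha>)"
    for \<alpha> by simp
  then show "p = q"
    by (intro poly_mapping_eqI) (simp add: lookup_monomial_map_image[OF assms])
qed

lemma monomial_map_id: "monomial_map (\<lambda>\<alpha>. \<alpha>) p = p"
proof -
  have "inj (\<lambda>\<alpha>::'a. \<alpha>)" by (simp add: inj_on_def)
  then show ?thesis by (intro poly_mapping_eqI) (rule lookup_monomial_map_image)
qed

lemma mult_eq_sum_single: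
  fixes p q :: "'a::monoid_add \<Rightarrow>\<^sub>0 'k::semiring_0"
  shows "p * q = (\<Sum>\<alpha>\<in>Poly_Mapping.keys p. \<Sum>\<beta>\<in>Poly_Mapping.keys q.
    Poly_Mapping.single (\<alpha> + \<beta>) (Poly_Mapping.lookup p \<alpha> * Poly_Mapping.lookup q \<beta>))"
proof -
  have "p * q = monomial_map (\<lambda>\<alpha>. \<alpha>) p * monomial_map (\<lambda>\<alpha>. \<alpha>) q"
    by (simp only: monomial_map_id)
  then show ?thesis
    by (simp add: monomial_map_def sum_distrib_left sum_distrib_right mult_single
        sum.swap[of _ "Poly_Mapping.keys q"])
qed

lemma monomial_map_mult:
  fixes E :: "'a::monoid_add \<Rightarrow> 'b::monoid_add" and p q :: "'a \<Rightarrow>\<^sub>0 'k::semiring_0"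
  assumes "\<And>\<alpha> \<beta>. E (\<alpha> + \<beta>) = E \<alpha> + E \<beta>"
  shows "monomial_map E (p * q) = monomial_map E p * monomial_map E q"
proof -
  have "monomial_map E p * monomial_map E q = (\<Sum>\<alpha>\<in>Poly_Mapping.keys p. \<Sum>\<beta>\<in>Poly_Mapping.keys q.
      Poly_Mapping.single (E \<alpha> + E \<beta>) (Poly_Mapping.lookup p \<alpha> * Poly_Mapping.lookup q \<beta>))"
    by (simp add: monomial_map_def sum_distrib_left sum_distrib_right mult_single
        sum.swap[of _ "Poly_Mapping.keys q"])
  then show ?thesis
    by (simp add: mult_eq_sum_single monomial_map_sum monomial_map_single assms)
qed

lemma monomial_map_lc_bracket:
  fixes E :: "('v \<Rightarrow>\<^sub>0 int) \<Rightarrow> ('u \<Rightarrow>\<^sub>0 int)"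
    and w :: "'v \<Rightarrow> 'v \<Rightarrow> 'k::comm_ring_1" and w' :: "'u \<Rightarrow> 'u \<Rightarrow> 'k"
  assumes "inj E"
    and "\<And>\<alpha> \<beta>. E (\<alpha> + \<beta>) = E \<alpha> + E \<beta>"
    and "\<And>\<alpha> \<beta>. lc_pair w' (E \<alpha>) (E \<beta>) = lc_pair w \<alpha> \<beta>"
  shows "monomial_map E (lc_bracket w p q) = lc_bracket w' (monomial_map E p) (monomial_map E q)"
proof -
  have "lc_bracket w' (monomial_map E p) (monomial_map E q) =
    (\<Sum>\<alpha>\<in>Poly_Mapping.keys p. \<Sum>\<beta>\<in>Poly_Mapping.keys q. Poly_Mapping.single (E \<alpha> + E \<beta>)
      (Poly_Mapping.lookup p \<alpha> * Poly_Mapping.lookup q \<beta> * lc_pair w' (E \<alpha>) (E \<beta>)))"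
    unfolding lc_bracket_def keys_monomial_map[OF assms(1)]
    by (simp add: sum.reindex inj_on_subset[OF assms(1)] lookup_monomial_map_image[OF assms(1)])
  then show ?thesis
    by (simp add: lc_bracket_def monomial_map_sum monomial_map_single assms(2,3))
qed

lemma lc_pair_eq_sum_UNIV:
  assumes "finite (UNIV :: 'v set)"
  shows "lc_pair w \<alpha> \<beta> = (\<Sum>i\<in>(UNIV :: 'v set). \<Sum>j\<in>UNIV.
    of_int (Poly_Mapping.lookup \<alpha> i * Poly_Mapping.lookup \<beta> j) * w i j)"
proof -
  have inner: "(\<Sum>j\<in>Poly_Mapping.keys \<beta>. of_int (Poly_Mapping.lookup \<alpha> i * Poly_Mapping.lookup \<beta> j) * w i j)
     = (\<Sum>j\<in>UNIV. of_int (Poly_Mapping.lookup \<alpha> i * Poly_Mapping.lookup \<beta> j) * w i j)" for i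
    by (rule sum.mono_neutral_left) (use assms in \<open>auto simp: in_keys_iff\<close>)
  have "lc_pair w \<alpha> \<beta> = (\<Sum>i\<in>Poly_Mapping.keys \<alpha>. \<Sum>j\<in>UNIV.
      of_int (Poly_Mapping.lookup \<alpha> i * Poly_Mapping.lookup \<beta> j) * w i j)"
    unfolding lc_pair_def inner ..
  also have "\<dots> = (\<Sum>i\<in>UNIV. \<Sum>j\<in>UNIV.
      of_int (Poly_Mapping.lookup \<alpha> i * Poly_Mapping.lookup \<beta> j) * w i j)"
    by (rule sum.mono_neutral_left) (use assms in \<open>auto simp: in_keys_iff\<close>)
  finally show ?thesis .
qed

lemma UNIV_V4: "(UNIV :: V4 set) = {a4, b4, c4, d4, e4, f4, h4}"
  by (auto intro: V4.exhaust)

lemma UNIV_V2: "(UNIV :: V2 set) = {a2, b2, c2, d2, e2, f2, g2, h2, i2}"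
  by (auto intro: V2.exhaust)

lemma lookup_exp_map [simp]:
  "Poly_Mapping.lookup (exp_map \<alpha>) a2 = Poly_Mapping.lookup \<alpha> a4"
  "Poly_Mapping.lookup (exp_map \<alpha>) b2 = Poly_Mapping.lookup \<alpha> b4"
  "Poly_Mapping.lookup (exp_map \<alpha>) c2 = Poly_Mapping.lookup \<alpha> c4"
  "Poly_Mapping.lookup (exp_map \<alpha>) d2 = Poly_Mapping.lookup \<alpha> d4"
  "Poly_Mapping.lookup (exp_map \<alpha>) e2 = Poly_Mapping.lookup \<alpha> e4"
  "Poly_Mapping.lookup (exp_map \<alpha>) f2 = Poly_Mapping.lookup \<alpha> f4"
  "Poly_Mapping.lookup (exp_map \<alpha>) g2
     = Poly_Mapping.lookup \<alpha> a4 + Poly_Mapping.lookup \<alpha> c4 + Poly_Mapping.lookup \<alpha> d4"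
  "Poly_Mapping.lookup (exp_map \<alpha>) h2 = Poly_Mapping.lookup \<alpha> h4"
  "Poly_Mapping.lookup (exp_map \<alpha>) i2 = 0"
  by (simp_all add: exp_map_def lookup_add lookup_single)

lemma exp_map_add: "exp_map (\<alpha> + \<beta>) = exp_map \<alpha> + exp_map \<beta>"
  by (rule poly_mapping_eqI) (case_tac k; simp add: lookup_add)

lemma exp_map_zero: "exp_map 0 = 0"
  by (rule poly_mapping_eqI) (case_tac k; simp)

lemma inj_exp_map: "inj exp_map"
proof (rule injI)
  fix \<alpha> \<beta> assume "exp_map \<alpha> = exp_map \<beta>"
  then have "Poly_Mapping.lookup (exp_map \<alpha>) u = Poly_Mapping.lookup (exp_map \<beta>) u" for u
    by simp
  from this[of a2] this[of b2] this[of c2] this[of d2] this[of e2] this[of f2] this[of h2]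
  show "\<alpha> = \<beta>"
    by (intro poly_mapping_eqI, case_tac k) simp_all
qed

lemma lc_pair_exp_map:
  "lc_pair (w2 :: V2 \<Rightarrow> V2 \<Rightarrow> 'k::field_char_0) (exp_map \<alpha>) (exp_map \<beta>) = lc_pair w4 \<alpha> \<beta>"
proof -
  have "finite (UNIV :: V2 set)" "finite (UNIV :: V4 set)"
    by (simp_all add: UNIV_V2 UNIV_V4)
  then show ?thesis
    by (simp add: lc_pair_eq_sum_UNIV UNIV_V2 UNIV_V4 w2_def w4_def) (simp add: field_simps)
qed

lemma exp_map_single_one:
  "exp_map (Poly_Mapping.single a4 1) = Poly_Mapping.single a2 1 + Poly_Mapping.single g2 1"
  "exp_map (Poly_Mapping.single b4 1) = Poly_Mapping.single b2 1"
  "exp_map (Poly_Mapping.single c4 1) = Poly_Mapping.single c2 1 + Poly_Mapping.single g2 1"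
  "exp_map (Poly_Mapping.single d4 1) = Poly_Mapping.single d2 1 + Poly_Mapping.single g2 1"
  "exp_map (Poly_Mapping.single e4 1) = Poly_Mapping.single e2 1"
  "exp_map (Poly_Mapping.single f4 1) = Poly_Mapping.single f2 1"
  "exp_map (Poly_Mapping.single h4 1) = Poly_Mapping.single h2 1"
  by (simp_all add: exp_map_def)

theorem mainTheorem8:
  shows "phi (lvar a4 :: (V4, 'k::field_char_0) lpoly) = lvar a2 * lvar g2
    \<and> phi (lvar b4 :: (V4, 'k) lpoly) = lvar b2
    \<and> phi (lvar c4 :: (V4, 'k) lpoly) = lvar c2 * lvar g2
    \<and> phi (lvar d4 :: (V4, 'k) lpoly) = lvar d2 * lvar g2
    \<and> phi (lvar e4 :: (V4, 'k) lpoly) = lvar e2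
    \<and> phi (lvar f4 :: (V4, 'k) lpoly) = lvar f2
    \<and> phi (lvar h4 :: (V4, 'k) lpoly) = lvar h2
    \<and> phi (1 :: (V4, 'k) lpoly) = 1
    \<and> (\<forall>p q :: (V4, 'k) lpoly. phi (p + q) = phi p + phi q)
    \<and> (\<forall>p q :: (V4, 'k) lpoly. phi (p * q) = phi p * phi q)
    \<and> (\<forall>(c::'k) (p :: (V4, 'k) lpoly). phi (Poly_Mapping.single 0 c * p) = Poly_Mapping.single 0 c * phi p)
    \<and> (\<forall>p q :: (V4, 'k) lpoly. phi (lc_bracket w4 p q) = lc_bracket w2 (phi p) (phi q))
    \<and> inj (phi :: (V4, 'k) lpoly \<Rightarrow> (V2, 'k) lpoly)"
proof -
  have add: "phi (p + q) = phi p + phi q" for p q :: "(V4, 'k) lpoly"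
    by (simp add: phi_eq_monomial_map monomial_map_add)
  have mult: "phi (p * q) = phi p * phi q" for p q :: "(V4, 'k) lpoly"
    unfolding phi_eq_monomial_map using exp_map_add by (rule monomial_map_mult)
  have single: "phi (Poly_Mapping.single \<alpha> c) = Poly_Mapping.single (exp_map \<alpha>) c"
    for \<alpha> and c :: 'k
    by (simp add: phi_eq_monomial_map monomial_map_single)
  have bracket: "phi (lc_bracket w4 p q) = lc_bracket w2 (phi p) (phi q)" for p q :: "(V4, 'k) lpoly"
    unfolding phi_eq_monomial_map
    using inj_exp_map exp_map_add lc_pair_exp_map by (rule monomial_map_lc_bracket)
  have inj: "inj (phi :: (V4, 'k) lpoly \<Rightarrow> _)"
    unfolding phi_eq_monomial_map using inj_exp_map by (rule inj_monomial_map)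
  show ?thesis
    using single[of 0 1]
    by (simp add: add mult single bracket inj exp_map_zero exp_map_single_one
        lvar_def lmonom_def mult_single)
qed

end
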